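(* Let $N\ge 4$ be even and let $P_1,\dots,P_N$ be an $N$-periodic billiard trajectory in $E$. For $j=1,2$ let $P_{j,i}^{-1}$ be the inversion of $P_i$ in the unit circle centered at $f_j$, i.e. $P_{j,i}^{-1}=f_j+\dfrac{P_i-f_j}{|P_i-f_j|^2}$, and let $A_j^\dagger$ be the signed area of the polygon $P_{j,1}^{-1},\dots,P_{j,N}^{-1}$. Then $A_1^\dagger=A_2^\dagger$, i.e. $A_1^\dagger/A_2^\dagger=1$.
   Context: Let $E$ be the ellipse $x^2/a^2+y^2/b^2=1$ with $a>b>0$, center $O=(0,0)$ and foci $f_1=(-\sqrt{a^2-b^2},0)$, $f_2=(\sqrt{a^2-b^2},0)$. An $N$-periodic billiard trajectory is a convex polygon with vertices $P_1,\dots,P_N\in E$ (indices mod $N$), listed counterclockwise and winding once around $O$, with $P_i\neq P_{i+1}$, such that at every vertex $P_i$ the normal line to $E$ at $P_i$ bisects the angle $\angle P_{i-1}P_iP_{i+1}$, and all of whose sides are tangent to a common ellipse confocal with $E$. The signed area of a polygon with vertices $W_i=(x_i,y_i)$, $i=1,\dots,N$ (indices mod $N$), is $S=\tfrac12\sum_{i=1}^N (x_iy_{i+1}-x_{i+1}y_i)$. *)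

theory Defs
  imports "HOL-Analysis.Analysis"
begin

type_synonym pt = "real \<times> real"

definition on_ellipse :: "real \<Rightarrow> real \<Rightarrow> pt \<Rightarrow> bool" where
  "on_ellipse a b p \<longleftrightarrow> (fst p)\<^sup>2 / a\<^sup>2 + (snd p)\<^sup>2 / b\<^sup>2 = 1"

definition cross2 :: "pt \<Rightarrow> pt \<Rightarrow> real" where
  "cross2 u v = fst u * snd v - snd u * fst v"

definition len2 :: "pt \<Rightarrow> real" where
  "len2 u = sqrt ((fst u)\<^sup>2 + (snd u)\<^sup>2)"

definition focus1 :: "real \<Rightarrow> real \<Rightarrow> pt" where
  "focus1 a b = (- sqrt (a\<^sup>2 - b\<^sup>2), 0)"

definition focus2 :: "real \<Rightarrow> real \<Rightarrow> pt" where
  "focus2 a b = (sqrt (a\<^sup>2 - b\<^sup>2), 0)"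

text \<open>Normal direction of the ellipse at p: gradient (x/a^2, y/b^2).
  The normal line at P bisects the angle P(i-1) P P(i+1): the sum of the
  unit vectors towards the neighbours is a nonzero vector on the normal line.\<close>
definition normal_bisects :: "real \<Rightarrow> real \<Rightarrow> pt \<Rightarrow> pt \<Rightarrow> pt \<Rightarrow> bool" where
  "normal_bisects a b p q r \<longleftrightarrow>
     (let u = (q - p) /\<^sub>R len2 (q - p); w = (r - p) /\<^sub>R len2 (r - p);
          n = (fst p / a\<^sup>2, snd p / b\<^sup>2)
      in u + w \<noteq> 0 \<and> cross2 (u + w) n = 0)"

definition line_tangent_ellipse :: "real \<Rightarrow> real \<Rightarrow> pt \<Rightarrow> pt \<Rightarrow> bool" where
  "line_tangent_ellipse al be p q \<longleftrightarrow>
     (\<exists>!z. (\<exists>t::real. z = p + t *\<^sub>R (q - p)) \<and> (fst z)\<^sup>2 / al + (snd z)\<^sup>2 / be = 1)"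

text \<open>Ellipses confocal with x^2/a^2+y^2/b^2=1 are x^2/(a^2-l)+y^2/(b^2-l)=1, l < b^2.\<close>
definition billiard_trajectory :: "real \<Rightarrow> real \<Rightarrow> nat \<Rightarrow> (nat \<Rightarrow> pt) \<Rightarrow> bool" where
  "billiard_trajectory a b N P \<longleftrightarrow>
     (\<forall>i<N. on_ellipse a b (P i)) \<and>
     (\<forall>i<N. P i \<noteq> P (Suc i mod N)) \<and>
     \<comment> \<open>convex, counterclockwise, winding once around O\<close>
     (\<exists>\<theta>::nat \<Rightarrow> real. (\<forall>i<N. P i = (a * cos (\<theta> i), b * sin (\<theta> i))) \<and>
        (\<forall>i. Suc i < N \<longrightarrow> \<theta> i < \<theta> (Suc i)) \<and> \<theta> (N - 1) < \<theta> 0 + 2 * pi) \<and>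
     (\<forall>i<N. normal_bisects a b (P i) (P ((i + N - 1) mod N)) (P (Suc i mod N))) \<and>
     (\<exists>l. l < b\<^sup>2 \<and> (\<forall>i<N. line_tangent_ellipse (a\<^sup>2 - l) (b\<^sup>2 - l) (P i) (P (Suc i mod N))))"

definition inversion :: "pt \<Rightarrow> pt \<Rightarrow> pt" where
  "inversion f p = f + (1 / ((fst (p - f))\<^sup>2 + (snd (p - f))\<^sup>2)) *\<^sub>R (p - f)"

definition signed_area :: "nat \<Rightarrow> (nat \<Rightarrow> pt) \<Rightarrow> real" where
  "signed_area N W = (1/2) * (\<Sum>i<N. fst (W i) * snd (W (Suc i mod N)) - fst (W (Suc i mod N)) * snd (W i))"

end

theory Submission
  imports Defs
begin

text \<open>Write the vertices as \<open>P\<^sub>i = (a cos \<theta>\<^sub>i, b sin \<theta>\<^sub>i)\<close>. The chord from \<open>\<theta>\<close> to \<open>\<theta>'\<close> is tangent to the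
  confocal caustic with parameter \<open>l\<close> iff \<open>sin\<^sup>2((\<theta>' - \<theta>)/2) = l (a\<^sup>2 sin\<^sup>2 m + b\<^sup>2 cos\<^sup>2 m) / (a\<^sup>2 b\<^sup>2)\<close>
  with \<open>m = (\<theta> + \<theta>')/2\<close>, so for chords shorter than \<open>\<pi>\<close> the half-length \<open>D(m)\<close> is a function of the
  midpoint. Since \<open>|D'| < 1\<close>, both ends \<open>m \<plusminus> D(m)\<close> are increasing in \<open>m\<close>: the successor map
  \<open>\<theta> \<mapsto> \<theta>'\<close> is a monotone circle map, and it commutes with \<open>\<theta> \<mapsto> \<theta> - \<pi>\<close>. Shifting the lifted
  orbit by half its period and subtracting \<open>\<pi>\<close> therefore yields another orbit with the same rotation
  number, and order preservation forces the two to coincide: \<open>\<theta>\<^sub>i\<^sub>+\<^sub>N\<^sub>/\<^sub>2 = \<theta>\<^sub>i + \<pi>\<close>, i.e.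
  \<open>P\<^sub>i\<^sub>+\<^sub>N\<^sub>/\<^sub>2 = -P\<^sub>i\<close>. As \<open>f\<^sub>2 = -f\<^sub>1\<close>, the inverted polygon for \<open>f\<^sub>2\<close> is the point reflection of a cyclic
  relabelling of the one for \<open>f\<^sub>1\<close>, and both operations preserve the signed area.\<close>

section \<open>Chords of the ellipse tangent to a confocal caustic\<close>

lemma quadratic_unique_root_discriminant:
  fixes p q r t0 :: real
  assumes "p \<noteq> 0" and root: "p * t0\<^sup>2 + q * t0 + r = 0"
    and unique: "\<And>t. p * t\<^sup>2 + q * t + r = 0 \<Longrightarrow> t = t0"
  shows "q\<^sup>2 = 4 * p * r"
proof -
  have "p * (- q / p - t0)\<^sup>2 + q * (- q / p - t0) + r = p * t0\<^sup>2 + q * t0 + r"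
    using \<open>p \<noteq> 0\<close> by (simp add: field_simps power2_eq_square)
  hence "- q / p - t0 = t0" using root by (intro unique) simp
  hence "q = - 2 * p * t0" using \<open>p \<noteq> 0\<close> by (simp add: field_simps)
  thus ?thesis using root by (simp add: power2_eq_square algebra_simps)
qed

lemma line_tangent_ellipse_discriminant:
  fixes A B :: real and p r :: pt
  assumes A: "A > 0" and B: "B > 0" and "r \<noteq> 0"
    and tangent: "line_tangent_ellipse A B p (p + r)"
  shows "B * (fst r)\<^sup>2 + A * (snd r)\<^sup>2 = (cross2 p r)\<^sup>2"
proof -
  define \<alpha> \<beta> \<gamma> where "\<alpha> = (fst r)\<^sup>2 / A + (snd r)\<^sup>2 / B"
    and "\<beta> = 2 * (fst p * fst r / A + snd p * snd r / B)"
    and "\<gamma> = (fst p)\<^sup>2 / A + (snd p)\<^sup>2 / B - 1"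
  have on_line: "(fst (p + t *\<^sub>R r))\<^sup>2 / A + (snd (p + t *\<^sub>R r))\<^sup>2 / B = 1
      \<longleftrightarrow> \<alpha> * t\<^sup>2 + \<beta> * t + \<gamma> = 0" for t
  proof -
    have "\<alpha> * t\<^sup>2 + \<beta> * t + \<gamma> = (fst (p + t *\<^sub>R r))\<^sup>2 / A + (snd (p + t *\<^sub>R r))\<^sup>2 / B - 1"
      unfolding \<alpha>_def \<beta>_def \<gamma>_def using A B by (simp add: field_simps power2_eq_square)
    thus ?thesis by linarith
  qed
  have "\<alpha> > 0"
  proof -
    have "fst r \<noteq> 0 \<or> snd r \<noteq> 0" using \<open>r \<noteq> 0\<close> by (simp add: prod_eq_iff)
    thus ?thesis unfolding \<alpha>_def using A B by (auto intro: add_pos_nonneg add_nonneg_pos)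
  qed
  from tangent obtain z
    where z: "(\<exists>t. z = p + t *\<^sub>R (p + r - p)) \<and> (fst z)\<^sup>2 / A + (snd z)\<^sup>2 / B = 1"
      and z_unique: "\<And>w. (\<exists>t. w = p + t *\<^sub>R (p + r - p)) \<and> (fst w)\<^sup>2 / A + (snd w)\<^sup>2 / B = 1
        \<Longrightarrow> w = z"
    unfolding line_tangent_ellipse_def by blast
  obtain t0 where t0: "z = p + t0 *\<^sub>R r" using z by auto
  have "\<beta>\<^sup>2 = 4 * \<alpha> * \<gamma>"
  proof (rule quadratic_unique_root_discriminant)
    show "\<alpha> \<noteq> 0" using \<open>\<alpha> > 0\<close> by simp
    show "\<alpha> * t0\<^sup>2 + \<beta> * t0 + \<gamma> = 0" using z t0 on_line[of t0] by simp
    show "t = t0" if "\<alpha> * t\<^sup>2 + \<beta> * t + \<gamma> = 0" for t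
    proof -
      have "p + t *\<^sub>R r = p + t0 *\<^sub>R r" using z_unique[of "p + t *\<^sub>R r"] that on_line[of t] t0 by auto
      thus ?thesis using \<open>r \<noteq> 0\<close> by (simp add: scaleR_cancel_right)
    qed
  qed
  hence "(fst p * fst r * B + snd p * snd r * A)\<^sup>2
      = ((fst r)\<^sup>2 * B + (snd r)\<^sup>2 * A) * ((fst p)\<^sup>2 * B + (snd p)\<^sup>2 * A - A * B)"
    unfolding \<alpha>_def \<beta>_def \<gamma>_def using A B by (simp add: field_simps power2_eq_square)
  hence "A * B * (B * (fst r)\<^sup>2 + A * (snd r)\<^sup>2 - (cross2 p r)\<^sup>2) = 0"
    unfolding cross2_def by (simp add: algebra_simps power2_eq_square)
  thus ?thesis using A B by simp
qed

definition chord_sin2 :: "real \<Rightarrow> real \<Rightarrow> real \<Rightarrow> real \<Rightarrow> real" where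
  "chord_sin2 a b l m = l * (a\<^sup>2 * (sin m)\<^sup>2 + b\<^sup>2 * (cos m)\<^sup>2) / (a\<^sup>2 * b\<^sup>2)"

definition tangent_chord :: "real \<Rightarrow> real \<Rightarrow> real \<Rightarrow> real \<Rightarrow> real \<Rightarrow> bool" where
  "tangent_chord a b l x y \<longleftrightarrow> (sin ((y - x) / 2))\<^sup>2 = chord_sin2 a b l ((x + y) / 2)"

lemma tangent_chord_if_line_tangent:
  fixes a b l x y :: real
  assumes "a > b" "b > 0" "l < b\<^sup>2"
    and distinct: "(a * cos x, b * sin x) \<noteq> (a * cos y, b * sin y)"
    and tangent: "line_tangent_ellipse (a\<^sup>2 - l) (b\<^sup>2 - l) (a * cos x, b * sin x) (a * cos y, b * sin y)"
  shows "tangent_chord a b l x y" and "sin ((y - x) / 2) \<noteq> 0"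
proof -
  define m d where "m = (x + y) / 2" and "d = (y - x) / 2"
  have x: "x = m - d" and y: "y = m + d" unfolding m_def d_def by (simp_all add: field_simps)
  define p r where "p = (a * cos x, b * sin x)"
    and "r = (- 2 * a * sin m * sin d, 2 * b * cos m * sin d)"
  have q: "(a * cos y, b * sin y) = p + r"
    unfolding p_def r_def x y by (simp add: cos_add cos_diff sin_add sin_diff algebra_simps)
  have "b\<^sup>2 < a\<^sup>2" using assms by (simp add: power_strict_mono)
  hence A: "a\<^sup>2 - l > 0" and B: "b\<^sup>2 - l > 0" using \<open>l < b\<^sup>2\<close> by linarith+
  have "r \<noteq> 0" using distinct q p_def by auto
  hence sin_d: "sin d \<noteq> 0" unfolding r_def by (auto simp: zero_prod_def)
  thus "sin ((y - x) / 2) \<noteq> 0" unfolding d_def .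
  have "cross2 p r = 2 * a * b * sin d * (cos m * cos x + sin m * sin x)"
    unfolding cross2_def p_def r_def by (simp add: algebra_simps)
  also have "cos m * cos x + sin m * sin x = cos d" using cos_diff[of m x] x by simp
  finally have "(b\<^sup>2 - l) * (fst r)\<^sup>2 + (a\<^sup>2 - l) * (snd r)\<^sup>2 = (2 * a * b * sin d * cos d)\<^sup>2"
    using line_tangent_ellipse_discriminant[OF A B \<open>r \<noteq> 0\<close>] tangent q p_def by simp
  hence "4 * (sin d)\<^sup>2 * ((b\<^sup>2 - l) * a\<^sup>2 * (sin m)\<^sup>2 + (a\<^sup>2 - l) * b\<^sup>2 * (cos m)\<^sup>2 - a\<^sup>2 * b\<^sup>2 * (cos d)\<^sup>2) = 0"
    unfolding r_def by (simp add: power_mult_distrib algebra_simps)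
  hence "(b\<^sup>2 - l) * a\<^sup>2 * (sin m)\<^sup>2 + (a\<^sup>2 - l) * b\<^sup>2 * (cos m)\<^sup>2 = a\<^sup>2 * b\<^sup>2 * (cos d)\<^sup>2"
    using sin_d by simp
  hence "a\<^sup>2 * b\<^sup>2 * (sin d)\<^sup>2 = l * (a\<^sup>2 * (sin m)\<^sup>2 + b\<^sup>2 * (cos m)\<^sup>2)"
    using sin_cos_squared_add[of m] sin_cos_squared_add[of d] by algebra
  thus "tangent_chord a b l x y"
    unfolding tangent_chord_def chord_sin2_def m_def[symmetric] d_def[symmetric] using assms(1,2)
    by (simp add: field_simps)
qed

lemma ellipse_weight_bounds:
  fixes a b m :: real
  assumes "b\<^sup>2 \<le> a\<^sup>2"
  shows "b\<^sup>2 \<le> a\<^sup>2 * (sin m)\<^sup>2 + b\<^sup>2 * (cos m)\<^sup>2" and "a\<^sup>2 * (sin m)\<^sup>2 + b\<^sup>2 * (cos m)\<^sup>2 \<le> a\<^sup>2"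
proof -
  have "a\<^sup>2 * (sin m)\<^sup>2 + b\<^sup>2 * (cos m)\<^sup>2 = b\<^sup>2 + (a\<^sup>2 - b\<^sup>2) * (sin m)\<^sup>2"
    using sin_cos_squared_add[of m] by algebra
  moreover have "0 \<le> (a\<^sup>2 - b\<^sup>2) * (sin m)\<^sup>2" using assms by simp
  ultimately show "b\<^sup>2 \<le> a\<^sup>2 * (sin m)\<^sup>2 + b\<^sup>2 * (cos m)\<^sup>2" by linarith
  have "a\<^sup>2 * (sin m)\<^sup>2 + b\<^sup>2 * (cos m)\<^sup>2 = a\<^sup>2 - (a\<^sup>2 - b\<^sup>2) * (cos m)\<^sup>2"
    using sin_cos_squared_add[of m] by algebra
  moreover have "0 \<le> (a\<^sup>2 - b\<^sup>2) * (cos m)\<^sup>2" using assms by simp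
  ultimately show "a\<^sup>2 * (sin m)\<^sup>2 + b\<^sup>2 * (cos m)\<^sup>2 \<le> a\<^sup>2" by linarith
qed

lemma chord_sin2_bounds:
  assumes "a > b" "b > 0" "0 < l" "l < b\<^sup>2"
  shows "0 < chord_sin2 a b l m" and "chord_sin2 a b l m < 1"
proof -
  define H where "H = a\<^sup>2 * (sin m)\<^sup>2 + b\<^sup>2 * (cos m)\<^sup>2"
  have "b\<^sup>2 \<le> a\<^sup>2" using assms by (simp add: power_mono)
  hence H: "b\<^sup>2 \<le> H" "H \<le> a\<^sup>2" unfolding H_def by (rule ellipse_weight_bounds)+
  have "0 < b\<^sup>2" using assms by simp
  with H have "0 < H" by linarith
  thus "0 < chord_sin2 a b l m" unfolding chord_sin2_def H_def[symmetric] using assms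
    by (intro divide_pos_pos mult_pos_pos) auto
  have "l * H < b\<^sup>2 * H" using \<open>l < b\<^sup>2\<close> \<open>0 < H\<close> by simp
  also have "\<dots> \<le> b\<^sup>2 * a\<^sup>2" using H(2) \<open>0 < b\<^sup>2\<close> by simp
  finally show "chord_sin2 a b l m < 1"
    unfolding chord_sin2_def H_def[symmetric] using assms by (simp add: field_simps)
qed

lemma tangent_chord_caustic_pos:
  assumes "a > b" "b > 0" "tangent_chord a b l x y" "sin ((y - x) / 2) \<noteq> 0"
  shows "l > 0"
proof -
  define H where "H = a\<^sup>2 * (sin ((x + y) / 2))\<^sup>2 + b\<^sup>2 * (cos ((x + y) / 2))\<^sup>2"
  have "b\<^sup>2 \<le> a\<^sup>2" using assms by (simp add: power_mono)
  hence "0 < H" unfolding H_def using ellipse_weight_bounds(1) \<open>b > 0\<close>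
    by (smt (verit) zero_less_power)
  have "0 < chord_sin2 a b l ((x + y) / 2)"
    using assms(3,4) unfolding tangent_chord_def by (metis zero_less_power2)
  moreover have "0 < a\<^sup>2 * b\<^sup>2" using assms(1,2) by simp
  ultimately show "l > 0" unfolding chord_sin2_def H_def[symmetric] using \<open>0 < H\<close>
    by (simp add: zero_less_divide_iff zero_less_mult_iff)
qed

lemma tangent_chord_not_half_turn:
  assumes "a > b" "b > 0" "0 < l" "l < b\<^sup>2" "tangent_chord a b l x y"
  shows "y - x \<noteq> pi"
proof
  assume "y - x = pi"
  hence "chord_sin2 a b l ((x + y) / 2) = 1" using assms(5) unfolding tangent_chord_def by simp
  thus False using chord_sin2_bounds(2)[OF assms(1-4), of "(x + y) / 2"] by simp
qed

lemma chord_sin2_plus_pi: "chord_sin2 a b l (m + pi) = chord_sin2 a b l m"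
  unfolding chord_sin2_def by simp

lemma tangent_chord_shift_pi:
  assumes "tangent_chord a b l x y"
  shows "tangent_chord a b l (x - pi) (y - pi)"
proof -
  have "(x - pi + (y - pi)) / 2 + pi = (x + y) / 2" by (simp add: field_simps)
  hence "chord_sin2 a b l ((x - pi + (y - pi)) / 2) = chord_sin2 a b l ((x + y) / 2)"
    by (metis chord_sin2_plus_pi)
  thus ?thesis using assms unfolding tangent_chord_def by simp
qed

lemma tangent_chord_swap:
  assumes "tangent_chord a b l x y"
  shows "tangent_chord a b l y (x + 2 * pi)"
proof -
  have "(x + 2 * pi - y) / 2 = pi - (y - x) / 2" and "(y + (x + 2 * pi)) / 2 = (x + y) / 2 + pi"
    by (simp_all add: field_simps)
  thus ?thesis using assms unfolding tangent_chord_def by (simp only: chord_sin2_plus_pi sin_pi_minus)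
qed

section \<open>The successor map on chords is monotone\<close>

definition half_chord :: "real \<Rightarrow> real \<Rightarrow> real \<Rightarrow> real \<Rightarrow> real" where
  "half_chord a b l m = arcsin (sqrt (chord_sin2 a b l m))"

lemma tangent_chord_half_chord:
  assumes "tangent_chord a b l x y" "0 < y - x" "y - x < pi"
  shows "(y - x) / 2 = half_chord a b l ((x + y) / 2)"
proof -
  define d where "d = (y - x) / 2"
  have "0 < d" "d < pi / 2" using assms(2,3) unfolding d_def by simp_all
  hence "sin d > 0" by (intro sin_gt_zero) auto
  hence "sqrt (chord_sin2 a b l ((x + y) / 2)) = sin d"
    using assms(1) unfolding tangent_chord_def d_def[symmetric]
    by (metis less_eq_real_def real_sqrt_unique)
  thus ?thesis unfolding half_chord_def d_def[symmetric] using \<open>0 < d\<close> \<open>d < pi / 2\<close>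
    by (simp add: arcsin_sin)
qed

lemma chord_sin2_has_derivative:
  "(chord_sin2 a b l has_real_derivative
      2 * l * (a\<^sup>2 - b\<^sup>2) * sin m * cos m / (a\<^sup>2 * b\<^sup>2)) (at m)"
proof -
  have "((\<lambda>m. l * (a\<^sup>2 * (sin m)\<^sup>2 + b\<^sup>2 * (cos m)\<^sup>2)) has_real_derivative
      2 * l * (a\<^sup>2 - b\<^sup>2) * sin m * cos m) (at m)"
    by (auto intro!: derivative_eq_intros simp: power2_eq_square algebra_simps)
  from DERIV_cdivide[OF this, of "a\<^sup>2 * b\<^sup>2"] show ?thesis unfolding chord_sin2_def[abs_def] .
qed

lemma chord_sin2_derivative_bound:
  assumes "a > b" "b > 0" "0 < l" "l < b\<^sup>2"
  shows "(2 * l * (a\<^sup>2 - b\<^sup>2) * sin m * cos m / (a\<^sup>2 * b\<^sup>2))\<^sup>2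
    < 4 * chord_sin2 a b l m * (1 - chord_sin2 a b l m)"
proof -
  define u v H where "u = (sin m)\<^sup>2" and "v = (cos m)\<^sup>2" and "H = a\<^sup>2 * u + b\<^sup>2 * v"
  have "u + v = 1" "0 \<le> u" "0 \<le> v" unfolding u_def v_def by simp_all
  have "0 < a\<^sup>2 * b\<^sup>2" using assms by simp
  have "b\<^sup>2 \<le> a\<^sup>2" using assms by (simp add: power_mono)
  have "0 \<le> b ^ 4 * v" using \<open>0 \<le> v\<close> by simp
  have "0 < a ^ 4 * u + b ^ 4 * v"
    using \<open>u + v = 1\<close> \<open>0 \<le> u\<close> \<open>0 \<le> v\<close> assms
    by (smt (verit) mult_nonneg_nonneg mult_pos_pos zero_less_power)
  hence "l * (a ^ 4 * u + b ^ 4 * v) < b\<^sup>2 * (a ^ 4 * u + b ^ 4 * v)" using assms by simp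
  also have "\<dots> \<le> a\<^sup>2 * b\<^sup>2 * H"
    using mult_right_mono[OF \<open>b\<^sup>2 \<le> a\<^sup>2\<close>, of "b ^ 4 * v"] \<open>0 \<le> b ^ 4 * v\<close>
    unfolding H_def by (simp add: algebra_simps power2_eq_square power4_eq_xxxx)
  also have "a ^ 4 * u + b ^ 4 * v = (a\<^sup>2 - b\<^sup>2)\<^sup>2 * u * v + H\<^sup>2"
    unfolding H_def using \<open>u + v = 1\<close> by (simp add: algebra_simps power2_eq_square power4_eq_xxxx) algebra
  finally have "l * ((a\<^sup>2 - b\<^sup>2)\<^sup>2 * u * v + H\<^sup>2) < a\<^sup>2 * b\<^sup>2 * H" .
  hence "l * (l * ((a\<^sup>2 - b\<^sup>2)\<^sup>2 * u * v + H\<^sup>2)) < l * (a\<^sup>2 * b\<^sup>2 * H)"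
    using \<open>0 < l\<close> by simp
  hence "4 * (l\<^sup>2 * (a\<^sup>2 - b\<^sup>2)\<^sup>2 * u * v) < 4 * (l * H * (a\<^sup>2 * b\<^sup>2 - l * H))"
    by (simp add: algebra_simps power2_eq_square)
  hence "4 * (l\<^sup>2 * (a\<^sup>2 - b\<^sup>2)\<^sup>2 * u * v) / (a\<^sup>2 * b\<^sup>2)\<^sup>2
      < 4 * (l * H * (a\<^sup>2 * b\<^sup>2 - l * H)) / (a\<^sup>2 * b\<^sup>2)\<^sup>2"
    by (rule divide_strict_right_mono) (use assms(1,2) in simp)
  moreover have "4 * chord_sin2 a b l m * (1 - chord_sin2 a b l m)
      = 4 * (l * H / (a\<^sup>2 * b\<^sup>2)) * (1 - l * H / (a\<^sup>2 * b\<^sup>2))"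
    unfolding chord_sin2_def H_def u_def v_def by simp
  moreover have "\<dots> = 4 * (l * H * (a\<^sup>2 * b\<^sup>2 - l * H)) / (a\<^sup>2 * b\<^sup>2)\<^sup>2"
    using assms(1,2) by (simp add: field_simps power2_eq_square)
  ultimately show ?thesis unfolding u_def v_def by (simp add: power_mult_distrib power_divide)
qed

lemma half_chord_has_derivative:
  assumes "a > b" "b > 0" "0 < l" "l < b\<^sup>2"
  obtains D where "(half_chord a b l has_real_derivative D) (at m)" and "\<bar>D\<bar> < 1"
proof -
  define S S' where "S = chord_sin2 a b l m"
    and "S' = 2 * l * (a\<^sup>2 - b\<^sup>2) * sin m * cos m / (a\<^sup>2 * b\<^sup>2)"
  have "0 < S" "S < 1" unfolding S_def using chord_sin2_bounds[OF assms] by auto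
  have "((\<lambda>m. sqrt (chord_sin2 a b l m)) has_real_derivative inverse (sqrt S) / 2 * S') (at m)"
    using DERIV_chain'[OF chord_sin2_has_derivative DERIV_real_sqrt[OF \<open>0 < S\<close>, unfolded S_def]]
    unfolding S_def S'_def by (simp add: mult.commute)
  moreover have "(arcsin has_real_derivative inverse (sqrt (1 - S))) (at (sqrt S))"
    using DERIV_arcsin[of "sqrt S"] \<open>0 < S\<close> \<open>S < 1\<close> by (simp add: less_trans[of "-1" 0])
  ultimately have "(half_chord a b l has_real_derivative
      inverse (sqrt (1 - S)) * (inverse (sqrt S) / 2 * S')) (at m)"
    using DERIV_chain' unfolding half_chord_def[abs_def] S_def by blast
  moreover have "\<bar>S'\<bar> < 2 * sqrt S * sqrt (1 - S)"
  proof (rule power2_less_imp_less)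
    have "S'\<^sup>2 < 4 * S * (1 - S)"
      using chord_sin2_derivative_bound[OF assms, of m] unfolding S_def S'_def .
    thus "\<bar>S'\<bar>\<^sup>2 < (2 * sqrt S * sqrt (1 - S))\<^sup>2"
      using \<open>0 < S\<close> \<open>S < 1\<close> by (simp add: power_mult_distrib)
  qed (use \<open>0 < S\<close> \<open>S < 1\<close> in simp)
  hence "\<bar>inverse (sqrt (1 - S)) * (inverse (sqrt S) / 2 * S')\<bar> < 1"
    using \<open>0 < S\<close> \<open>S < 1\<close> by (simp add: abs_mult field_simps)
  ultimately show ?thesis by (rule that)
qed

lemma strict_mono_half_chord:
  assumes "a > b" "b > 0" "0 < l" "l < b\<^sup>2"
  shows "strict_mono (\<lambda>m. m + half_chord a b l m)" and "strict_mono (\<lambda>m. m - half_chord a b l m)"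
proof -
  have deriv: "\<exists>D. ((\<lambda>m. m + s * half_chord a b l m) has_real_derivative D) (at x) \<and> 0 < D"
    if "\<bar>s\<bar> = 1" for s x
  proof -
    obtain D where "(half_chord a b l has_real_derivative D) (at x)" "\<bar>D\<bar> < 1"
      using half_chord_has_derivative[OF assms] .
    hence "((\<lambda>m. m + s * half_chord a b l m) has_real_derivative 1 + s * D) (at x)"
      by (auto intro!: derivative_eq_intros)
    moreover have "0 < 1 + s * D" using \<open>\<bar>D\<bar> < 1\<close> that by (auto simp: abs_if split: if_splits)
    ultimately show ?thesis by blast
  qed
  show "strict_mono (\<lambda>m. m + half_chord a b l m)"
    using DERIV_pos_imp_increasing[OF _ deriv[of 1]] by (auto intro: strict_monoI)
  show "strict_mono (\<lambda>m. m - half_chord a b l m)"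
    using DERIV_pos_imp_increasing[OF _ deriv[of "-1"]] by (auto intro: strict_monoI)
qed

definition short_chord :: "real \<Rightarrow> real \<Rightarrow> real \<Rightarrow> real \<Rightarrow> real \<Rightarrow> bool" where
  "short_chord a b l x y \<longleftrightarrow> tangent_chord a b l x y \<and> 0 < y - x \<and> y - x < pi"

lemma short_chord_ends:
  assumes "short_chord a b l x y"
  shows "x = (x + y) / 2 - half_chord a b l ((x + y) / 2)"
    and "y = (x + y) / 2 + half_chord a b l ((x + y) / 2)"
  using tangent_chord_half_chord[of a b l x y] assms unfolding short_chord_def
  by (simp_all add: field_simps)

lemma short_chord_mono:
  assumes "a > b" "b > 0" "0 < l" "l < b\<^sup>2"
    and "short_chord a b l x y" "short_chord a b l x' y'" "x < x'"
  shows "y < y'"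
proof -
  note ends = short_chord_ends[OF assms(5)] short_chord_ends[OF assms(6)]
  have "(x + y) / 2 < (x' + y') / 2"
    using strict_mono_less[OF strict_mono_half_chord(2)[OF assms(1-4)]] ends \<open>x < x'\<close> by metis
  thus ?thesis using strict_mono_less[OF strict_mono_half_chord(1)[OF assms(1-4)]] ends by metis
qed

lemma short_chord_unique:
  assumes "a > b" "b > 0" "0 < l" "l < b\<^sup>2"
    and "short_chord a b l x y" "short_chord a b l x y'"
  shows "y = y'"
proof -
  note ends = short_chord_ends[OF assms(5)] short_chord_ends[OF assms(6)]
  have "(x + y) / 2 = (x + y') / 2"
    using strict_mono_eq[OF strict_mono_half_chord(2)[OF assms(1-4)]] ends by metis
  thus ?thesis by simp
qed

section \<open>Orbits of monotone relations\<close>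

lemma strict_mono_int_step:
  fixes f :: "int \<Rightarrow> 'a::order"
  assumes "\<And>n. f n < f (n + 1)"
  shows "strict_mono f"
proof (rule strict_monoI)
  show "f m < f n" if "m < n" for m n
    using that
  proof (induction n rule: int_gr_induct)
    case (step i) thus ?case using assms[of i] by (meson order.strict_trans)
  qed (use assms in simp)
qed

lemma int_interval_index:
  fixes f :: "int \<Rightarrow> real"
  assumes "lo < hi" "f lo \<le> v" "v < f hi"
  obtains k where "lo \<le> k" "k < hi" "f k \<le> v" "v < f (k + 1)"
proof -
  have "\<exists>k. lo \<le> k \<and> k < hi \<and> f k \<le> v \<and> v < f (k + 1)"
    using assms(1,3)
  proof (induction hi rule: int_gr_induct)
    case base thus ?case using assms(2) by auto
  next
    case (step i)
    show ?case
    proof (cases "v < f i")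
      case True thus ?thesis using step.IH by (metis zless_add1_eq)
    next
      case False thus ?thesis using step by (intro exI[of _ i]) auto
    qed
  qed
  thus ?thesis using that by blast
qed

lemma monotone_orbits_interlace:
  fixes f g :: "int \<Rightarrow> real" and R :: "real \<Rightarrow> real \<Rightarrow> bool"
  assumes mono: "\<And>x y x' y'. R x y \<Longrightarrow> R x' y' \<Longrightarrow> x < x' \<Longrightarrow> y < y'"
    and unique: "\<And>x y y'. R x y \<Longrightarrow> R x y' \<Longrightarrow> y = y'"
    and f: "\<And>n. R (f n) (f (n + 1))" and g: "\<And>n. R (g n) (g (n + 1))"
    and "f 0 \<le> g 0" "g 0 < f 1"
  shows "f (int i) \<le> g (int i) \<and> g (int i) < f (int i + 1)"
proof (induction i)
  case 0 thus ?case using assms(5,6) by simp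
next
  case (Suc i)
  hence "f (int i) < g (int i) \<or> f (int i) = g (int i)" by auto
  hence "f (int i + 1) \<le> g (int i + 1)"
    using mono[OF f g] unique[OF f] g[of "int i"] by (metis order.order_iff_strict)
  moreover have "g (int i + 1) < f (int i + 1 + 1)" using mono[OF g f] Suc.IH by blast
  ultimately show ?case by (simp add: add.commute)
qed

lemma monotone_orbit_half_period:
  fixes \<Theta> :: "int \<Rightarrow> real" and R :: "real \<Rightarrow> real \<Rightarrow> bool" and M :: int and c :: real
  assumes mono: "\<And>x y x' y'. R x y \<Longrightarrow> R x' y' \<Longrightarrow> x < x' \<Longrightarrow> y < y'"
    and unique: "\<And>x y y'. R x y \<Longrightarrow> R x y' \<Longrightarrow> y = y'"
    and orbit: "\<And>n. R (\<Theta> n) (\<Theta> (n + 1))"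
    and shifted: "\<And>n. R (\<Theta> n - c) (\<Theta> (n + 1) - c)"
    and "strict_mono \<Theta>" and period: "\<And>n. \<Theta> (n + 2 * M) = \<Theta> n + 2 * c" and "0 < M"
  shows "\<Theta> (int i + M) = \<Theta> (int i) + c"
proof -
  have less: "\<Theta> m < \<Theta> n \<longleftrightarrow> m < n" for m n using strict_mono_less[OF \<open>strict_mono \<Theta>\<close>] .
  have "0 < c" using period[of 0] less[of 0 "2 * M"] \<open>0 < M\<close> by simp
  obtain k where k: "- 2 * M \<le> k" "\<Theta> k \<le> \<Theta> M - c" "\<Theta> M - c < \<Theta> (k + 1)"
  proof (rule int_interval_index[of "- 2 * M" "2 * M" \<Theta> "\<Theta> M - c"])
    show "\<Theta> (- 2 * M) \<le> \<Theta> M - c"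
      using period[of "- 2 * M"] less[of 0 M] \<open>0 < M\<close> \<open>0 < c\<close> by simp
    show "\<Theta> M - c < \<Theta> (2 * M)" using less[of M "2 * M"] \<open>0 < M\<close> \<open>0 < c\<close> by simp
  qed (use \<open>0 < M\<close> in auto)
  have interlace_nat:
    "\<Theta> (k + int n) \<le> \<Theta> (int n + M) - c \<and> \<Theta> (int n + M) - c < \<Theta> (k + (int n + 1))" for n
  proof (rule monotone_orbits_interlace[where f = "\<lambda>n. \<Theta> (k + n)" and g = "\<lambda>n. \<Theta> (n + M) - c",
        OF mono unique])
    show "R (\<Theta> (k + n)) (\<Theta> (k + (n + 1)))" for n using orbit[of "k + n"] by (simp add: ac_simps)
    show "R (\<Theta> (n + M) - c) (\<Theta> (n + 1 + M) - c)" for n using shifted[of "n + M"] by (simp add: ac_simps)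
  qed (use k in \<open>simp_all add: ac_simps\<close>)
  have interlace: "\<Theta> (k + j) + c \<le> \<Theta> (j + M) \<and> \<Theta> (j + M) < \<Theta> (k + j + 1) + c"
    if "0 \<le> j" for j
  proof -
    from \<open>0 \<le> j\<close> obtain n where "j = int n" using nonneg_int_cases by blast
    thus ?thesis using interlace_nat[of n] by (simp add: ac_simps)
  qed
  have period': "\<Theta> (n + M + M) = \<Theta> n + 2 * c" for n using period[of n] by (simp add: ac_simps mult_2)
  \<comment> \<open>Going once around the period with the interlacing pins the offset \<open>k\<close> down to \<open>0\<close>.\<close>
  define j where "j = 2 * M"
  have "0 \<le> j" "0 \<le> j + M" "0 \<le> k + j" using k(1) \<open>0 < M\<close> unfolding j_def by simp_all
  have "\<Theta> (k + (k + j)) \<le> \<Theta> j"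
    using interlace[of "k + j"] interlace[of "j + M"] period'[of j] \<open>0 \<le> j + M\<close> \<open>0 \<le> k + j\<close>
    by (simp add: ac_simps)
  moreover have "\<Theta> j < \<Theta> (k + (k + j + 1) + 1)"
    using interlace[of "k + j + 1"] interlace[of "j + M"] period'[of j] \<open>0 \<le> j + M\<close> \<open>0 \<le> k + j\<close>
    by (simp add: ac_simps)
  ultimately have "k = 0" unfolding less by (simp add: not_less[symmetric] less)
  thus ?thesis using interlace[of "int i"] interlace[of "int i + M"] period'[of "int i"] \<open>0 < M\<close>
    by (simp add: ac_simps)
qed

section \<open>Periodic billiard trajectories are centrally symmetric\<close>

definition lift_angles :: "nat \<Rightarrow> (nat \<Rightarrow> real) \<Rightarrow> int \<Rightarrow> real" where
  "lift_angles N \<theta> n = \<theta> (nat (n mod int N)) + 2 * pi * of_int (n div int N)"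

lemma lift_angles_period:
  "0 < N \<Longrightarrow> lift_angles N \<theta> (n + int N) = lift_angles N \<theta> n + 2 * pi"
  unfolding lift_angles_def by (simp add: algebra_simps)

lemma cos_sin_lift_angles:
  "cos (lift_angles N \<theta> n) = cos (\<theta> (nat (n mod int N)))"
  "sin (lift_angles N \<theta> n) = sin (\<theta> (nat (n mod int N)))"
  unfolding lift_angles_def by (simp_all add: cos_add sin_add)

lemma strict_mono_lift_angles:
  assumes "0 < N" and "\<And>i. Suc i < N \<Longrightarrow> \<theta> i < \<theta> (Suc i)" and "\<theta> (N - 1) < \<theta> 0 + 2 * pi"
  shows "strict_mono (lift_angles N \<theta>)"
proof (rule strict_mono_int_step)
  fix n :: int
  define r where "r = n mod int N"
  have "0 \<le> r" "r < int N" unfolding r_def using assms(1) by simp_all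
  have split: "n + 1 = (r + 1) + n div int N * int N" unfolding r_def by simp
  have div: "(n + 1) div int N = n div int N + (r + 1) div int N"
    and mod: "(n + 1) mod int N = (r + 1) mod int N"
    using assms(1) by (subst split, simp)+
  show "lift_angles N \<theta> n < lift_angles N \<theta> (n + 1)"
  proof (cases "r + 1 < int N")
    case True
    hence "\<theta> (nat r) < \<theta> (Suc (nat r))" using assms(2) \<open>0 \<le> r\<close> by (simp add: nat_less_iff)
    thus ?thesis using True \<open>0 \<le> r\<close> unfolding lift_angles_def div mod r_def[symmetric]
      by (simp add: Suc_nat_eq_nat_zadd1 add.commute)
  next
    case False
    hence "r + 1 = int N" and "nat r = N - 1"
      using \<open>r < int N\<close> assms(1) by (simp_all add: nat_eq_iff of_nat_diff)
    thus ?thesis using assms(1,3) unfolding lift_angles_def div mod r_def[symmetric]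
      by (simp add: nat_diff_distrib algebra_simps)
  qed
qed

lemma lifted_tangent_chords_short:
  fixes \<Theta> :: "int \<Rightarrow> real" and N :: int
  assumes ab: "a > b" "b > 0" "0 < l" "l < b\<^sup>2"
    and "strict_mono \<Theta>" and period: "\<And>n. \<Theta> (n + N) = \<Theta> n + 2 * pi" and "2 < N"
    and chord: "\<And>n. tangent_chord a b l (\<Theta> n) (\<Theta> (n + 1))"
  shows "short_chord a b l (\<Theta> n) (\<Theta> (n + 1))"
proof -
  have less: "\<Theta> m < \<Theta> k \<longleftrightarrow> m < k" for m k using strict_mono_less[OF \<open>strict_mono \<Theta>\<close>] .
  \<comment> \<open>After a chord longer than \<open>\<pi>\<close>, the point \<open>\<Theta> (n + 1)\<close> would start two different short chords:
    to \<open>\<Theta> (n + 2)\<close>, and the reversed chord to \<open>\<Theta> (n + N) = \<Theta> n + 2\<pi>\<close>.\<close>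
  have "\<Theta> (n + 1) - \<Theta> n < pi"
  proof (rule ccontr)
    assume "\<not> ?thesis"
    with tangent_chord_not_half_turn[OF ab chord] have long: "pi < \<Theta> (n + 1) - \<Theta> n"
      by (metis linorder_neqE_linordered_idom)
    have "short_chord a b l (\<Theta> (n + 1)) (\<Theta> (n + N))"
      unfolding short_chord_def
      using tangent_chord_swap[OF chord[of n]] period[of n] long less[of "n + 1" "n + N"] \<open>2 < N\<close>
      by simp
    moreover have "short_chord a b l (\<Theta> (n + 1)) (\<Theta> (n + 1 + 1))"
      unfolding short_chord_def
      using chord[of "n + 1"] period[of n] long less[of "n + 1 + 1" "n + N"] less[of "n + 1" "n + 1 + 1"]
        \<open>2 < N\<close>
      by simp
    ultimately have "\<Theta> (n + N) = \<Theta> (n + 1 + 1)" using short_chord_unique[OF ab] by blast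
    thus False using \<open>2 < N\<close> strict_mono_eq[OF \<open>strict_mono \<Theta>\<close>] by fastforce
  qed
  thus ?thesis unfolding short_chord_def using chord[of n] less[of n "n + 1"] by simp
qed

lemma billiard_trajectory_lift:
  assumes "a > b" "b > 0" "3 \<le> N" "billiard_trajectory a b N P"
  obtains \<Theta> l where "strict_mono \<Theta>" "\<And>n. \<Theta> (n + int N) = \<Theta> n + 2 * pi"
    "\<And>n. P (nat (n mod int N)) = (a * cos (\<Theta> n), b * sin (\<Theta> n))"
    "0 < l" "l < b\<^sup>2" "\<And>n. short_chord a b l (\<Theta> n) (\<Theta> (n + 1))"
proof -
  from assms(4) obtain \<theta> l where
    distinct: "\<forall>i<N. P i \<noteq> P (Suc i mod N)" and
    on_E: "\<forall>i<N. P i = (a * cos (\<theta> i), b * sin (\<theta> i))" and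
    "\<forall>i. Suc i < N \<longrightarrow> \<theta> i < \<theta> (Suc i)" "\<theta> (N - 1) < \<theta> 0 + 2 * pi" and
    "l < b\<^sup>2" and
    tangent: "\<forall>i<N. line_tangent_ellipse (a\<^sup>2 - l) (b\<^sup>2 - l) (P i) (P (Suc i mod N))"
    unfolding billiard_trajectory_def by blast
  define \<Theta> where "\<Theta> = lift_angles N \<theta>"
  have "0 < N" using assms(3) by simp
  have mono: "strict_mono \<Theta>"
    unfolding \<Theta>_def using strict_mono_lift_angles \<open>0 < N\<close> \<open>\<theta> (N - 1) < \<theta> 0 + 2 * pi\<close>
      \<open>\<forall>i. Suc i < N \<longrightarrow> \<theta> i < \<theta> (Suc i)\<close> by blast
  have period: "\<Theta> (n + int N) = \<Theta> n + 2 * pi" for n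
    unfolding \<Theta>_def using lift_angles_period \<open>0 < N\<close> by blast
  have P_lift: "P (nat (n mod int N)) = (a * cos (\<Theta> n), b * sin (\<Theta> n))" for n
    using on_E \<open>0 < N\<close> unfolding \<Theta>_def cos_sin_lift_angles by (simp add: nat_less_iff)
  have tangent_lift: "(a * cos (\<Theta> n), b * sin (\<Theta> n)) \<noteq> (a * cos (\<Theta> (n + 1)), b * sin (\<Theta> (n + 1)))
      \<and> line_tangent_ellipse (a\<^sup>2 - l) (b\<^sup>2 - l)
          (a * cos (\<Theta> n), b * sin (\<Theta> n)) (a * cos (\<Theta> (n + 1)), b * sin (\<Theta> (n + 1)))" for n
  proof -
    define i where "i = nat (n mod int N)"
    have "i < N" unfolding i_def using \<open>0 < N\<close> by (simp add: nat_less_iff)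
    have "int (Suc i mod N) = (int i + 1) mod int N" by (simp add: of_nat_mod add.commute)
    also have "\<dots> = (n + 1) mod int N" unfolding i_def using \<open>0 < N\<close> by (simp add: mod_add_left_eq)
    finally have "Suc i mod N = nat ((n + 1) mod int N)" by simp
    thus ?thesis using distinct tangent \<open>i < N\<close> P_lift[of n] P_lift[of "n + 1"] unfolding i_def by auto
  qed
  have chords: "tangent_chord a b l (\<Theta> n) (\<Theta> (n + 1))" "sin ((\<Theta> (n + 1) - \<Theta> n) / 2) \<noteq> 0" for n
    using tangent_chord_if_line_tangent[OF assms(1,2) \<open>l < b\<^sup>2\<close>] tangent_lift by blast+
  have "0 < l" using tangent_chord_caustic_pos[OF assms(1,2) chords] .
  show ?thesis
  proof (rule that[OF mono period P_lift \<open>0 < l\<close> \<open>l < b\<^sup>2\<close>])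
    show "short_chord a b l (\<Theta> n) (\<Theta> (n + 1))" for n
      using lifted_tangent_chords_short[OF assms(1,2) \<open>0 < l\<close> \<open>l < b\<^sup>2\<close> mono period _ chords(1)]
        assms(3)
      by simp
  qed
qed

lemma billiard_trajectory_antipodal:
  assumes "a > b" "b > 0" "even N" "4 \<le> N" "billiard_trajectory a b N P" "i < N"
  shows "P ((i + N div 2) mod N) = - P i"
proof -
  have "3 \<le> N" using assms(4) by simp
  then obtain \<Theta> l where mono: "strict_mono \<Theta>" and period: "\<And>n. \<Theta> (n + int N) = \<Theta> n + 2 * pi"
    and P_lift: "\<And>n. P (nat (n mod int N)) = (a * cos (\<Theta> n), b * sin (\<Theta> n))"
    and l: "0 < l" "l < b\<^sup>2" and short: "\<And>n. short_chord a b l (\<Theta> n) (\<Theta> (n + 1))"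
    using billiard_trajectory_lift[OF assms(1,2) _ assms(5)] by blast
  have "\<Theta> (int i + int (N div 2)) = \<Theta> (int i) + pi"
  proof (rule monotone_orbit_half_period[where R = "short_chord a b l"])
    show "y < y'" if "short_chord a b l x y" "short_chord a b l x' y'" "x < x'" for x y x' y'
      using short_chord_mono[OF assms(1,2) l that] .
    show "y = y'" if "short_chord a b l x y" "short_chord a b l x y'" for x y y'
      using short_chord_unique[OF assms(1,2) l that] .
    show "short_chord a b l (\<Theta> n - pi) (\<Theta> (n + 1) - pi)" for n
      using short[of n] tangent_chord_shift_pi unfolding short_chord_def by simp
    show "\<Theta> (n + 2 * int (N div 2)) = \<Theta> n + 2 * pi" for n
    proof -
      have "2 * int (N div 2) = int N" using \<open>even N\<close> by auto
      thus ?thesis using period[of n] by simp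
    qed
    show "0 < int (N div 2)" using assms(4) by simp
  qed (use mono short in simp_all)
  moreover have "(int i + int (N div 2)) mod int N = int ((i + N div 2) mod N)" by (simp add: of_nat_mod)
  ultimately show ?thesis
    using P_lift[of "int i + int (N div 2)"] P_lift[of "int i"] \<open>i < N\<close> by simp
qed

section \<open>Inversion and signed area\<close>

lemma inversion_uminus: "inversion (- f) (- p) = - inversion f p"
proof -
  have "(fst f - fst p)\<^sup>2 = (fst p - fst f)\<^sup>2" "(snd f - snd p)\<^sup>2 = (snd p - snd f)\<^sup>2"
    by (simp_all add: power2_commute)
  thus ?thesis unfolding inversion_def by (simp add: algebra_simps)
qed

lemma signed_area_uminus: "signed_area N (\<lambda>i. - W i) = signed_area N W"
  unfolding signed_area_def by simp

lemma signed_area_cong: "(\<And>i. i < N \<Longrightarrow> W i = V i) \<Longrightarrow> signed_area N W = signed_area N V"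
  unfolding signed_area_def by (intro arg_cong[where f = "\<lambda>s. 1 / 2 * s"] sum.cong) auto

lemma signed_area_rotate:
  assumes "0 < N"
  shows "signed_area N (\<lambda>i. W ((i + k) mod N)) = signed_area N W"
proof -
  define g where "g j = fst (W j) * snd (W (Suc j mod N)) - fst (W (Suc j mod N)) * snd (W j)" for j
  have "bij_betw (\<lambda>i. (i + k) mod N) {..<N} {..<N}"
  proof (rule bij_betwI[where g = "\<lambda>j. (j + (N - k mod N)) mod N"])
    have "k mod N < N" using assms by simp
    show "((i + k) mod N + (N - k mod N)) mod N = i" if "i \<in> {..<N}" for i
    proof -
      have "((i + k) mod N + (N - k mod N)) mod N = (i + k mod N + (N - k mod N)) mod N"
        by (metis mod_add_left_eq mod_add_right_eq)
      also have "\<dots> = (i + N) mod N" using \<open>k mod N < N\<close> by simp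
      finally show ?thesis using that by simp
    qed
    show "((j + (N - k mod N)) mod N + k) mod N = j" if "j \<in> {..<N}" for j
    proof -
      have "((j + (N - k mod N)) mod N + k) mod N = (j + (N - k mod N) + k mod N) mod N"
        by (metis mod_add_left_eq mod_add_right_eq)
      also have "\<dots> = (j + N) mod N" using \<open>k mod N < N\<close> by simp
      finally show ?thesis using that by simp
    qed
  qed (use assms in auto)
  hence "(\<Sum>i<N. g ((i + k) mod N)) = (\<Sum>j<N. g j)" by (rule sum.reindex_bij_betw)
  moreover have "Suc ((i + k) mod N) mod N = (Suc i mod N + k) mod N" for i
    by (simp add: mod_Suc_eq mod_add_left_eq)
  ultimately show ?thesis unfolding signed_area_def g_def by simp
qed

theorem mainTheorem4:
  fixes a b :: real and N :: nat and P :: "nat \<Rightarrow> real \<times> real"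
  assumes "a > b" and "b > 0"
    and "even N" and "N \<ge> 4"
    and "billiard_trajectory a b N P"
  shows "signed_area N (\<lambda>i. inversion (focus1 a b) (P i))
       = signed_area N (\<lambda>i. inversion (focus2 a b) (P i))"
proof -
  let ?inv1 = "\<lambda>i. inversion (focus1 a b) (P i)"
  have "0 < N" using assms(4) by simp
  have "signed_area N (\<lambda>i. inversion (focus2 a b) (P i))
      = signed_area N (\<lambda>i. - ?inv1 ((i + N div 2) mod N))"
  proof (rule signed_area_cong)
    fix i assume "i < N"
    have "focus2 a b = - focus1 a b" unfolding focus1_def focus2_def by simp
    thus "inversion (focus2 a b) (P i) = - ?inv1 ((i + N div 2) mod N)"
      using billiard_trajectory_antipodal[OF assms \<open>i < N\<close>] inversion_uminus by (metis minus_minus)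
  qed
  also have "\<dots> = signed_area N ?inv1"
    using signed_area_uminus[of N "\<lambda>i. ?inv1 ((i + N div 2) mod N)"] signed_area_rotate[OF \<open>0 < N\<close>]
    by simp
  finally show ?thesis by simp
qed

end
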